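(* Consider a panel with $i=1,\dots,N$, $t=1,\dots,T$, regressors $X_{it}=(X_{it,1},\dots,X_{it,K})$, and $\Gamma_{it}=h(\alpha_i,\gamma_t)$ with $\alpha_i\in\mathcal{A}$, $\gamma_t\in\mathcal{C}$. Let units be assigned to groups $g_i\in\{1,\dots,G\}$ and time periods to groups $c_t\in\{1,\dots,C\}$, and let $\widehat\lambda^*_i\in\mathbb{R}^{R^*}$, $\widehat f^*_t\in\mathbb{R}^{R^*}$ be given (random) vectors. Define $\widetilde X_k=M_NX_kM_T$, $\widetilde\Gamma=M_N\Gamma M_T$ and $$\kappa_{NT}=\Big(\sum_{i=1}^N\sum_{t=1}^T\widetilde X_{it}'\widetilde X_{it}\Big)^{-1}\sum_{i=1}^N\sum_{t=1}^T\widetilde X_{it}'\,\widetilde\Gamma_{it}.$$ Suppose there is a sequence $\xi_{NT}>0$ with $\xi_{NT}\to0$ as $N,T\to\infty$ such that: (i) $h$ is at least twice continuously differentiable with uniformly bounded second derivatives; (ii) every unit belongs to exactly one group $g_i$ and every period to exactly one group $c_t$, and all groups have size at most $Q_{\max}$ (a fixed bound); (iii) there are functions $\lambda^*:\mathcal{A}\to\mathbb{R}^{R^*}$, $f^*:\mathcal{C}\to\mathbb{R}^{R^*}$ and $B>0$ with $\|a-b\|\le B\|\lambda^*(a)-\lambda^*(b)\|$ for all $a,b\in\mathcal{A}$ and $\|a-b\|\le B\|f^*(a)-f^*(b)\|$ for all $a,b\in\mathcal{C}$, and $\mathcal{A},\mathcal{C}$ are convex; (iv) $\frac1N\sum_{i=1}^N\|\widehat\lambda^*_i-\lambda^*(\alpha_i)\|^2=O_P(\xi_{NT})$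 and $\frac1T\sum_{t=1}^T\|\widehat f^*_t-f^*(\gamma_t)\|^2=O_P(\xi_{NT})$; (v) $\frac1N\sum_{i=1}^N\|\widehat\lambda^*_i-\widehat\lambda^*_{j(i)}\|^2=O_P(\xi_{NT})$ for any matching function $j(i)\in\{1,\dots,N\}$ with $g_i=g_{j(i)}$, and $\frac1T\sum_{t=1}^T\|\widehat f^*_t-\widehat f^*_{s(t)}\|^2=O_P(\xi_{NT})$ for any matching function $s(t)\in\{1,\dots,T\}$ with $c_t=c_{s(t)}$; (vi) $\max_{k,i,t}|\widetilde X_{it,k}|=O_P(1)$ and $\operatorname{plim}_{N,T\to\infty}\frac1{NT}\sum_{i,t}\widetilde X_{it}'\widetilde X_{it}=\Omega$ for a positive definite non-random matrix $\Omega$. Then $\kappa_{NT}=O_P(\xi_{NT})$.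
   Context: $X_k=(X_{it,k})$ and $\Gamma=(\Gamma_{it})$ are $N\times T$ matrices. $D_\nu$ is the $N\times G$ binary matrix whose $i$-th row has a single one in column $g_i$, and $D_\delta$ is the $T\times C$ binary matrix whose $t$-th row has a single one in column $c_t$. $M_N=\mathbb{I}_N-D_\nu(D_\nu'D_\nu)^{-1}D_\nu'$ and $M_T=\mathbb{I}_T-D_\delta(D_\delta'D_\delta)^{-1}D_\delta'$. $\widetilde X_{it}=(\widetilde X_{it,1},\dots,\widetilde X_{it,K})$ is a $1\times K$ row vector, so $\widetilde X_{it}'\widetilde X_{it}$ is $K\times K$. $\|\cdot\|$ is the Euclidean norm. *)

theory Defs
  imports "HOL-Analysis.Analysis" "HOL-Probability.Probability"
begin

text \<open>Outer probability (so that O_P and plim make sense without separate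
  measurability hypotheses; it coincides with the probability on measurable events).\<close>
definition outer_prob :: "'w measure \<Rightarrow> 'w set \<Rightarrow> real" where
  "outer_prob M A = Inf {measure M B | B. B \<in> sets M \<and> A \<subseteq> B}"

definition bigOP :: "'w measure \<Rightarrow> 'i filter \<Rightarrow> ('i \<Rightarrow> 'w \<Rightarrow> real) \<Rightarrow> ('i \<Rightarrow> real) \<Rightarrow> bool" where
  "bigOP M F Y a \<longleftrightarrow>
     (\<forall>eps>0. \<exists>Bd. eventually (\<lambda>n. outer_prob M {w \<in> space M. \<bar>Y n w\<bar> > Bd * a n} < eps) F)"

definition conv_in_prob :: "'w measure \<Rightarrow> 'i filter \<Rightarrow> ('i \<Rightarrow> 'w \<Rightarrow> 'v::metric_space) \<Rightarrow> 'v \<Rightarrow> bool" where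
  "conv_in_prob M F S L \<longleftrightarrow>
     (\<forall>eps>0. ((\<lambda>n. outer_prob M {w \<in> space M. dist (S n w) L > eps}) \<longlongrightarrow> 0) F)"

text \<open>For a group assignment g on units 1..n, M_N = I - D (D'D)^{-1} D' acts on a vector
  x = (x_1,..,x_n) by subtracting from x_i the average of x over the group of i.\<close>
definition grp_avg :: "(nat \<Rightarrow> nat) \<Rightarrow> nat \<Rightarrow> (nat \<Rightarrow> 'v::real_vector) \<Rightarrow> nat \<Rightarrow> 'v" where
  "grp_avg g n x i =
     (1 / real (card {i' \<in> {1..n}. g i' = g i})) *\<^sub>R (\<Sum>i' \<in> {i' \<in> {1..n}. g i' = g i}. x i')"

text \<open>(M_N Z M_T)_{it} for an N x T array Z (entries may be vectors, i.e. applied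
  componentwise to the K regressor matrices simultaneously).\<close>
definition two_way_demean ::
  "(nat \<Rightarrow> nat) \<Rightarrow> (nat \<Rightarrow> nat) \<Rightarrow> nat \<Rightarrow> nat \<Rightarrow> (nat \<Rightarrow> nat \<Rightarrow> 'v::real_vector) \<Rightarrow> nat \<Rightarrow> nat \<Rightarrow> 'v" where
  "two_way_demean g c N T Z i t =
     (let ZT = (\<lambda>i' t'. Z i' t' - grp_avg c T (\<lambda>s. Z i' s) t')   \<comment> \<open>Z M_T\<close>
      in ZT i t - grp_avg g N (\<lambda>j. ZT j t) i)"

definition pos_def_mat :: "real^'k^'k \<Rightarrow> bool" where
  "pos_def_mat A \<longleftrightarrow> transpose A = A \<and> (\<forall>v. v \<noteq> 0 \<longrightarrow> v \<bullet> (A *v v) > 0)"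

text \<open>x' x for a 1 x K row vector x.\<close>
definition outer_self :: "real^'k \<Rightarrow> real^'k^'k" where
  "outer_self x = (\<chi> k l. x $ k * x $ l)"

definition kappa_NT ::
  "(nat \<Rightarrow> nat) \<Rightarrow> (nat \<Rightarrow> nat) \<Rightarrow> nat \<Rightarrow> nat \<Rightarrow> (nat \<Rightarrow> nat \<Rightarrow> real^'k) \<Rightarrow>
   (nat \<Rightarrow> nat \<Rightarrow> real) \<Rightarrow> real^'k" where
  "kappa_NT g c N T X Gam =
     matrix_inv (\<Sum>i\<in>{1..N}. \<Sum>t\<in>{1..T}. outer_self (two_way_demean g c N T X i t))
     *v (\<Sum>i\<in>{1..N}. \<Sum>t\<in>{1..T}.
           two_way_demean g c N T Gam i t *\<^sub>R two_way_demean g c N T X i t)"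

end

theory Submission
  imports Defs
begin

text \<open>
  Two-way within-group demeaning writes the demeaned Gamma at (i, t) as the average, over units i'
  in the group of i and periods t' in the group of t, of the double differences
  h(alpha_i, gamma_t) - h(alpha_i, gamma_t') - h(alpha_i', gamma_t) + h(alpha_i', gamma_t').
  A bounded mixed second derivative bounds these by L |alpha_i - alpha_i'| |gamma_t - gamma_t'|,
  hence by L/2 times the squared within-group deviations of alpha and of gamma. By (iii) and the
  triangle inequality through lambda-hat_i and lambda-hat_i', the deviations of alpha are controlled
  by the errors in (iv) and the within-group differences in (v); since groups have at most Q_max
  members, Q_max matching functions enumerate them, so all these terms are O_P(xi). Where the
  normalised Gram matrix is within mu/2 of Omega (mu the coercivity constant of Omega), its
  quadratic form is at least mu/2 |v|^2, so its inverse is bounded, and the O_P(1) bound on the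
  demeaned regressors gives kappa = O_P(xi).
\<close>

definition group_of :: "(nat \<Rightarrow> nat) \<Rightarrow> nat set \<Rightarrow> nat \<Rightarrow> nat set" where
  "group_of g I i = {i' \<in> I. g i' = g i}"

lemma group_of_eq: "i' \<in> group_of g I i \<Longrightarrow> group_of g I i' = group_of g I i"
  by (auto simp: group_of_def)

lemma card_group_of_pos: "finite I \<Longrightarrow> i \<in> I \<Longrightarrow> card (group_of g I i) > 0"
  by (auto simp: group_of_def card_gt_0_iff)

lemma sum_group_average:
  fixes F :: "nat \<Rightarrow> real"
  assumes "finite I"
  shows "(\<Sum>i\<in>I. (\<Sum>i'\<in>group_of g I i. F i') / card (group_of g I i)) = (\<Sum>i\<in>I. F i)"
proof -
  let ?G = "group_of g I"
  have "(\<Sum>i\<in>I. (\<Sum>i'\<in>?G i. F i') / card (?G i)) = (\<Sum>i\<in>I. \<Sum>i'\<in>?G i. F i' / card (?G i'))"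
    unfolding sum_divide_distrib by (intro sum.cong refl) (metis group_of_eq)
  also have "\<dots> = (\<Sum>i'\<in>I. \<Sum>i\<in>?G i'. F i' / card (?G i'))"
    using sum.swap_restrict[OF assms assms, of "\<lambda>i i'. F i' / card (?G i')" "\<lambda>i i'. g i' = g i"]
    by (simp add: group_of_def conj_commute eq_commute)
  also have "\<dots> = (\<Sum>i'\<in>I. F i')"
    using card_group_of_pos[OF assms] by (intro sum.cong refl) (simp add: less_imp_neq)
  finally show ?thesis .
qed

text \<open>
  The m-th member of the group of i in increasing order, and i itself once m exceeds the group
  size; for m < Q_max these are the matching functions j(i) of condition (v).
\<close>
definition nth_group_member :: "(nat \<Rightarrow> nat) \<Rightarrow> nat set \<Rightarrow> nat \<Rightarrow> nat \<Rightarrow> nat" where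
  "nth_group_member g I m i =
     (if m < card (group_of g I i) then sorted_list_of_set (group_of g I i) ! m else i)"

lemma nth_group_member_in_group:
  assumes "i \<in> I"
  shows "nth_group_member g I m i \<in> I \<and> g (nth_group_member g I m i) = g i"
proof (cases "m < card (group_of g I i)")
  case True
  then have "finite (group_of g I i)"
    by (metis card.infinite not_less_zero)
  with True have "sorted_list_of_set (group_of g I i) ! m \<in> group_of g I i"
    by (metis length_sorted_list_of_set nth_mem set_sorted_list_of_set)
  then show ?thesis using True by (simp add: nth_group_member_def group_of_def)
qed (use assms in \<open>simp add: nth_group_member_def\<close>)

lemma sum_group_le_sum_nth_group_member:
  fixes f :: "nat \<Rightarrow> real"
  assumes "\<And>x. f x \<ge> 0" and "card (group_of g I i) \<le> Q"
  shows "(\<Sum>i'\<in>group_of g I i. f i') \<le> (\<Sum>m<Q. f (nth_group_member g I m i))"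
proof (cases "finite (group_of g I i)")
  case True
  let ?L = "sorted_list_of_set (group_of g I i)"
  have "(\<Sum>i'\<in>group_of g I i. f i') = sum_list (map f ?L)"
    using True by (simp add: sum_list_distinct_conv_sum_set)
  also have "\<dots> = (\<Sum>m\<in>{0..<card (group_of g I i)}. f (?L ! m))"
    by (simp add: sum_list_sum_nth)
  also have "\<dots> = (\<Sum>m<card (group_of g I i). f (nth_group_member g I m i))"
    by (intro sum.cong) (auto simp: nth_group_member_def)
  also have "\<dots> \<le> (\<Sum>m<Q. f (nth_group_member g I m i))"
    using assms by (intro sum_mono2) auto
  finally show ?thesis .
qed (use assms in \<open>simp add: sum_nonneg\<close>)

section \<open>Mixed second differences\<close>

lemma partial_derivative_difference_le:
  fixes Dh :: "'a::euclidean_space \<times> 'c::euclidean_space \<Rightarrow> ('a \<times> 'c) \<Rightarrow>\<^sub>L real"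
    and D2h :: "'a \<times> 'c \<Rightarrow> ('a \<times> 'c) \<Rightarrow>\<^sub>L (('a \<times> 'c) \<Rightarrow>\<^sub>L real)"
  assumes "convex Cs" and sub: "A \<times> Cs \<subseteq> U"
    and D2h: "\<forall>x\<in>U. (Dh has_derivative blinfun_apply (D2h x)) (at x)"
    and bd: "\<forall>x\<in>A \<times> Cs. norm (D2h x) \<le> L"
    and p: "p \<in> A" and "c \<in> Cs" and "c' \<in> Cs"
  shows "\<bar>Dh (p, c) (u, 0) - Dh (p, c') (u, 0)\<bar> \<le> L * norm u * norm (c - c')"
proof -
  have der: "((\<lambda>q. Dh (p, q) (u, 0)) has_derivative (\<lambda>v. D2h (p, q) (0, v) (u, 0))) (at q within Cs)"
    if q: "q \<in> Cs" for q
  proof -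
    have "((\<lambda>q. (p, q)) has_derivative (\<lambda>v. (0, v))) (at q within Cs)"
      by (auto intro!: derivative_eq_intros)
    moreover have "(p, q) \<in> U"
      using sub p q by auto
    ultimately have "((\<lambda>q. Dh (p, q)) has_derivative (\<lambda>v. D2h (p, q) (0, v))) (at q within Cs)"
      using has_derivative_compose D2h by blast
    from blinfun.FDERIV[OF this has_derivative_const[of "(u, 0)"]]
    show ?thesis by simp
  qed
  have onorm: "onorm (\<lambda>v. D2h (p, q) (0, v) (u, 0)) \<le> L * norm u" if q: "q \<in> Cs" for q
  proof (rule onorm_le)
    fix v
    have "norm (D2h (p, q) (0, v) (u, 0)) \<le> norm (D2h (p, q)) * norm (0::'a, v) * norm (u, 0::'c)"
      by (meson norm_blinfun mult_right_mono norm_ge_zero order_trans)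
    also have "\<dots> \<le> L * norm v * norm u"
      using bd p q by (auto simp: norm_Pair intro!: mult_right_mono)
    finally show "norm (D2h (p, q) (0, v) (u, 0)) \<le> L * norm u * norm v"
      by (simp add: mult_ac)
  qed
  show ?thesis
    using differentiable_bound[OF \<open>convex Cs\<close> der onorm \<open>c \<in> Cs\<close> \<open>c' \<in> Cs\<close>] by simp
qed

lemma mixed_difference_bound:
  fixes h :: "'a::euclidean_space \<times> 'c::euclidean_space \<Rightarrow> real"
    and Dh :: "'a \<times> 'c \<Rightarrow> ('a \<times> 'c) \<Rightarrow>\<^sub>L real"
    and D2h :: "'a \<times> 'c \<Rightarrow> ('a \<times> 'c) \<Rightarrow>\<^sub>L (('a \<times> 'c) \<Rightarrow>\<^sub>L real)"
  assumes "convex A" and "convex Cs" and sub: "A \<times> Cs \<subseteq> U"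
    and Dh: "\<forall>x\<in>U. (h has_derivative blinfun_apply (Dh x)) (at x)"
    and D2h: "\<forall>x\<in>U. (Dh has_derivative blinfun_apply (D2h x)) (at x)"
    and bd: "\<forall>x\<in>A \<times> Cs. norm (D2h x) \<le> L"
    and "a \<in> A" and "a' \<in> A" and c: "c \<in> Cs" and c': "c' \<in> Cs"
  shows "\<bar>h (a, c) - h (a, c') - h (a', c) + h (a', c')\<bar> \<le> L * norm (a - a') * norm (c - c')"
proof -
  define \<phi> where "\<phi> p = h (p, c) - h (p, c')" for p
  have der: "(\<phi> has_derivative (\<lambda>u. Dh (p, c) (u, 0) - Dh (p, c') (u, 0))) (at p within A)"
    if p: "p \<in> A" for p
  proof -
    have "((\<lambda>p. h (p, d)) has_derivative (\<lambda>u. Dh (p, d) (u, 0))) (at p within A)"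
      if "d \<in> Cs" for d
    proof -
      have "((\<lambda>p. (p, d)) has_derivative (\<lambda>u. (u, 0))) (at p within A)"
        by (auto intro!: derivative_eq_intros)
      moreover have "(p, d) \<in> U"
        using sub p that by auto
      ultimately show ?thesis
        using has_derivative_compose Dh by blast
    qed
    from has_derivative_diff[OF this[OF c] this[OF c']] show ?thesis
      unfolding \<phi>_def .
  qed
  have onorm: "onorm (\<lambda>u. Dh (p, c) (u, 0) - Dh (p, c') (u, 0)) \<le> L * norm (c - c')"
    if "p \<in> A" for p
    using partial_derivative_difference_le[OF \<open>convex Cs\<close> sub D2h bd that c c']
    by (intro onorm_le) (simp add: mult_ac)
  have "norm (\<phi> a - \<phi> a') \<le> L * norm (c - c') * norm (a - a')"
    by (rule differentiable_bound[OF \<open>convex A\<close> der onorm \<open>a \<in> A\<close> \<open>a' \<in> A\<close>])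
  then show ?thesis
    by (simp add: \<phi>_def mult_ac algebra_simps)
qed

lemma grp_avg_eq: "grp_avg g n x i = (\<Sum>i'\<in>group_of g {1..n} i. x i') /\<^sub>R card (group_of g {1..n} i)"
  by (simp add: grp_avg_def group_of_def inverse_eq_divide)

lemma two_way_demean_eq_average_double_difference:
  fixes Z :: "nat \<Rightarrow> nat \<Rightarrow> real"
  assumes "i \<in> {1..N}" and "t \<in> {1..T}"
  shows "two_way_demean g c N T Z i t =
    (\<Sum>i'\<in>group_of g {1..N} i. \<Sum>t'\<in>group_of c {1..T} t. Z i t - Z i t' - Z i' t + Z i' t')
      / (card (group_of g {1..N} i) * card (group_of c {1..T} t))"
proof -
  define G where "G = group_of g {1..N} i"
  define C where "C = group_of c {1..T} t"
  have G: "card G > 0" and C: "card C > 0"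
    using assms card_group_of_pos by (auto simp: G_def C_def)
  have sum_dd: "(\<Sum>i'\<in>G. \<Sum>t'\<in>C. Z i t - Z i t' - Z i' t + Z i' t')
      = card G * card C * Z i t - card G * (\<Sum>t'\<in>C. Z i t') - card C * (\<Sum>i'\<in>G. Z i' t)
        + (\<Sum>i'\<in>G. \<Sum>t'\<in>C. Z i' t')"
    by (simp add: sum.distrib sum_subtractf sum_distrib_left algebra_simps)
  have demean: "two_way_demean g c N T Z i t = Z i t - inverse (card C) * (\<Sum>t'\<in>C. Z i t')
      - inverse (card G) * ((\<Sum>i'\<in>G. Z i' t) - inverse (card C) * (\<Sum>i'\<in>G. \<Sum>t'\<in>C. Z i' t'))"
    unfolding two_way_demean_def Let_def grp_avg_eq G_def[symmetric] C_def[symmetric]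
    by (simp add: sum_subtractf sum_distrib_left)
  show ?thesis
    unfolding G_def[symmetric] C_def[symmetric] sum_dd demean using G C by (simp add: field_simps)
qed

definition within_group_dispersion ::
  "(nat \<Rightarrow> nat) \<Rightarrow> nat set \<Rightarrow> (nat \<Rightarrow> 'v::real_normed_vector) \<Rightarrow> nat \<Rightarrow> real" where
  "within_group_dispersion g I x i =
     (\<Sum>i'\<in>group_of g I i. (norm (x i - x i'))\<^sup>2) / card (group_of g I i)"

lemma within_group_dispersion_nonneg: "within_group_dispersion g I x i \<ge> 0"
  by (simp add: within_group_dispersion_def sum_nonneg)

lemma abs_two_way_demean_le_dispersion:
  fixes h :: "'a::real_normed_vector \<times> 'c::real_normed_vector \<Rightarrow> real"
  assumes mixed: "\<And>a a' c c'. a \<in> A \<Longrightarrow> a' \<in> A \<Longrightarrow> c \<in> Cs \<Longrightarrow> c' \<in> Cs \<Longrightarrow>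
      \<bar>h (a, c) - h (a, c') - h (a', c) + h (a', c')\<bar> \<le> L * norm (a - a') * norm (c - c')"
    and "L \<ge> 0" and al: "\<And>i. al i \<in> A" and ga: "\<And>t. ga t \<in> Cs"
    and i: "i \<in> {1..N}" and t: "t \<in> {1..T}"
  shows "\<bar>two_way_demean g c N T (\<lambda>i t. h (al i, ga t)) i t\<bar> \<le>
     L / 2 * (within_group_dispersion g {1..N} al i + within_group_dispersion c {1..T} ga t)"
proof -
  define G where "G = group_of g {1..N} i"
  define C where "C = group_of c {1..T} t"
  have G: "card G > 0" and C: "card C > 0"
    using i t card_group_of_pos by (auto simp: G_def C_def)
  let ?dd = "\<lambda>i' t'. h (al i, ga t) - h (al i, ga t') - h (al i', ga t) + h (al i', ga t')"
  let ?sq = "\<lambda>i' t'. (norm (al i - al i'))\<^sup>2 + (norm (ga t - ga t'))\<^sup>2"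
  have dd: "\<bar>?dd i' t'\<bar> \<le> L / 2 * ?sq i' t'" for i' t'
  proof -
    have "\<bar>?dd i' t'\<bar> \<le> L * (norm (al i - al i') * norm (ga t - ga t'))"
      using mixed[OF al[of i] al[of i'] ga[of t] ga[of t']] by (simp add: mult.assoc)
    also have "\<dots> \<le> L * (?sq i' t' / 2)"
      using sum_squares_bound[of "norm (al i - al i')" "norm (ga t - ga t')"] \<open>L \<ge> 0\<close>
      by (intro mult_left_mono) auto
    finally show ?thesis by simp
  qed
  have "\<bar>two_way_demean g c N T (\<lambda>i t. h (al i, ga t)) i t\<bar>
      \<le> (\<Sum>i'\<in>G. \<Sum>t'\<in>C. \<bar>?dd i' t'\<bar>) / (card G * card C)"
    unfolding two_way_demean_eq_average_double_difference[OF i t] G_def[symmetric] C_def[symmetric]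
    by (simp add: abs_divide) (intro divide_right_mono order_trans[OF sum_abs] sum_mono sum_abs; simp)
  also have "\<dots> \<le> (\<Sum>i'\<in>G. \<Sum>t'\<in>C. L / 2 * ?sq i' t') / (card G * card C)"
    by (intro divide_right_mono sum_mono dd) simp
  also have "\<dots> = L / 2 * (card C * (\<Sum>i'\<in>G. (norm (al i - al i'))\<^sup>2)
      + card G * (\<Sum>t'\<in>C. (norm (ga t - ga t'))\<^sup>2)) / (card G * card C)"
    by (simp only: sum.distrib sum_constant flip: sum_distrib_left)
  also have "\<dots> = L / 2 * ((\<Sum>i'\<in>G. (norm (al i - al i'))\<^sup>2) / card G
      + (\<Sum>t'\<in>C. (norm (ga t - ga t'))\<^sup>2) / card C)"
    using G C by (simp add: field_simps)
  finally show ?thesis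
    by (simp add: within_group_dispersion_def G_def C_def)
qed

lemma mean_abs_two_way_demean_le:
  fixes h :: "'a::real_normed_vector \<times> 'c::real_normed_vector \<Rightarrow> real"
  assumes mixed: "\<And>a a' c c'. a \<in> A \<Longrightarrow> a' \<in> A \<Longrightarrow> c \<in> Cs \<Longrightarrow> c' \<in> Cs \<Longrightarrow>
      \<bar>h (a, c) - h (a, c') - h (a', c) + h (a', c')\<bar> \<le> L * norm (a - a') * norm (c - c')"
    and "L \<ge> 0" and "\<And>i. al i \<in> A" and "\<And>t. ga t \<in> Cs"
  shows "(\<Sum>i\<in>{1..N}. \<Sum>t\<in>{1..T}. \<bar>two_way_demean g c N T (\<lambda>i t. h (al i, ga t)) i t\<bar>) / (real N * real T)
    \<le> L / 2 * ((\<Sum>i\<in>{1..N}. within_group_dispersion g {1..N} al i) / N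
               + (\<Sum>t\<in>{1..T}. within_group_dispersion c {1..T} ga t) / T)"
proof -
  let ?dA = "within_group_dispersion g {1..N} al" and ?dC = "within_group_dispersion c {1..T} ga"
  have "(\<Sum>i\<in>{1..N}. \<Sum>t\<in>{1..T}. \<bar>two_way_demean g c N T (\<lambda>i t. h (al i, ga t)) i t\<bar>)
      \<le> (\<Sum>i\<in>{1..N}. \<Sum>t\<in>{1..T}. L / 2 * (?dA i + ?dC t))"
    by (intro sum_mono abs_two_way_demean_le_dispersion[OF mixed assms(2-4)]) auto
  also have "\<dots> = L / 2 * (\<Sum>i\<in>{1..N}. \<Sum>t\<in>{1..T}. ?dA i + ?dC t)"
    by (simp only: sum_distrib_left)
  also have "(\<Sum>i\<in>{1..N}. \<Sum>t\<in>{1..T}. ?dA i + ?dC t) = T * (\<Sum>i\<in>{1..N}. ?dA i) + N * (\<Sum>t\<in>{1..T}. ?dC t)"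
    by (simp add: sum.distrib flip: sum_distrib_left)
  finally have sum_le: "(\<Sum>i\<in>{1..N}. \<Sum>t\<in>{1..T}. \<bar>two_way_demean g c N T (\<lambda>i t. h (al i, ga t)) i t\<bar>)
      \<le> L / 2 * (T * (\<Sum>i\<in>{1..N}. ?dA i) + N * (\<Sum>t\<in>{1..T}. ?dC t))" .
  show ?thesis
  proof (cases "N = 0 \<or> T = 0")
    case True
    have "0 \<le> L / 2 * ((\<Sum>i\<in>{1..N}. ?dA i) / N + (\<Sum>t\<in>{1..T}. ?dC t) / T)"
      using \<open>L \<ge> 0\<close> by (simp add: sum_nonneg within_group_dispersion_nonneg)
    with True show ?thesis
      by auto
  next
    case False
    with sum_le show ?thesis
      by (simp add: field_simps)
  qed
qed

section \<open>Within-group dispersion and approximation errors\<close>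

lemma power2_norm_add3_le:
  fixes x y z :: "'v::real_normed_vector"
  shows "(norm (x + y + z))\<^sup>2 \<le> 3 * ((norm x)\<^sup>2 + (norm y)\<^sup>2 + (norm z)\<^sup>2)"
proof -
  have "(norm (x + y + z))\<^sup>2 \<le> (norm x + norm y + norm z)\<^sup>2"
    by (intro power_mono norm_triangle_le add_mono) auto
  also have "\<dots> \<le> 3 * ((norm x)\<^sup>2 + (norm y)\<^sup>2 + (norm z)\<^sup>2)"
    using sum_squares_bound[of "norm x" "norm y"] sum_squares_bound[of "norm x" "norm z"]
      sum_squares_bound[of "norm y" "norm z"]
    by (simp add: power2_eq_square algebra_simps)
  finally show ?thesis .
qed

lemma sum_within_group_dispersion_le:
  fixes al :: "nat \<Rightarrow> 'a::real_normed_vector" and lh :: "nat \<Rightarrow> 'v::real_normed_vector"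
  assumes I: "finite I"
    and lip: "\<And>a b. a \<in> A \<Longrightarrow> b \<in> A \<Longrightarrow> norm (a - b) \<le> Bc * norm (lam a - lam b)"
    and al: "\<And>i. al i \<in> A"
    and Q: "\<And>i. i \<in> I \<Longrightarrow> card (group_of g I i) \<le> Q"
  shows "(\<Sum>i\<in>I. within_group_dispersion g I al i)
     \<le> 3 * Bc\<^sup>2 * (2 * (\<Sum>i\<in>I. (norm (lh i - lam (al i)))\<^sup>2)
                  + (\<Sum>m<Q. \<Sum>i\<in>I. (norm (lh i - lh (nth_group_member g I m i)))\<^sup>2))"
proof -
  let ?G = "group_of g I"
  let ?e = "\<lambda>i. (norm (lh i - lam (al i)))\<^sup>2"
  let ?d = "\<lambda>i i'. (norm (lh i - lh i'))\<^sup>2"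
  have pt: "(norm (al i - al i'))\<^sup>2 \<le> 3 * Bc\<^sup>2 * (?e i + ?d i i' + ?e i')" for i i'
  proof -
    have "(norm (al i - al i'))\<^sup>2 \<le> (Bc * norm (lam (al i) - lam (al i')))\<^sup>2"
      using lip[OF al al] by (intro power_mono) auto
    also have "\<dots> = Bc\<^sup>2 * (norm ((lam (al i) - lh i) + (lh i - lh i') + (lh i' - lam (al i'))))\<^sup>2"
      by (simp add: power_mult_distrib)
    also have "\<dots> \<le> Bc\<^sup>2 * (3 * ((norm (lam (al i) - lh i))\<^sup>2 + ?d i i' + (norm (lh i' - lam (al i')))\<^sup>2))"
      by (intro mult_left_mono power2_norm_add3_le) simp
    also have "\<dots> = 3 * Bc\<^sup>2 * (?e i + ?d i i' + ?e i')"
      by (simp add: norm_minus_commute)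
    finally show ?thesis .
  qed
  have disp: "within_group_dispersion g I al i
      \<le> 3 * Bc\<^sup>2 * (?e i + (\<Sum>m<Q. ?d i (nth_group_member g I m i)) + (\<Sum>i'\<in>?G i. ?e i') / card (?G i))"
    if i: "i \<in> I" for i
  proof -
    have G: "card (?G i) \<ge> 1"
      using card_group_of_pos[OF I i, of g] by linarith
    have "within_group_dispersion g I al i \<le> (\<Sum>i'\<in>?G i. 3 * Bc\<^sup>2 * (?e i + ?d i i' + ?e i')) / card (?G i)"
      unfolding within_group_dispersion_def by (intro divide_right_mono sum_mono pt) simp
    also have "\<dots> = 3 * Bc\<^sup>2 * (?e i + (\<Sum>i'\<in>?G i. ?d i i') / card (?G i) + (\<Sum>i'\<in>?G i. ?e i') / card (?G i))"
      using G by (simp add: sum.distrib field_simps flip: sum_distrib_left)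
    also have "\<dots> \<le> 3 * Bc\<^sup>2 * (?e i + (\<Sum>m<Q. ?d i (nth_group_member g I m i)) + (\<Sum>i'\<in>?G i. ?e i') / card (?G i))"
    proof -
      have "(\<Sum>i'\<in>?G i. ?d i i') / card (?G i) \<le> (\<Sum>i'\<in>?G i. ?d i i')"
        using frac_le[of _ _ 1 "card (?G i)"] G by (simp add: sum_nonneg)
      also have "\<dots> \<le> (\<Sum>m<Q. ?d i (nth_group_member g I m i))"
        by (rule sum_group_le_sum_nth_group_member[OF _ Q[OF i]]) simp
      finally show ?thesis by (intro mult_left_mono add_mono) auto
    qed
    finally show ?thesis .
  qed
  have "(\<Sum>i\<in>I. within_group_dispersion g I al i)
      \<le> (\<Sum>i\<in>I. 3 * Bc\<^sup>2 * (?e i + (\<Sum>m<Q. ?d i (nth_group_member g I m i)) + (\<Sum>i'\<in>?G i. ?e i') / card (?G i)))"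
    by (intro sum_mono disp)
  also have "\<dots> = 3 * Bc\<^sup>2 * (2 * (\<Sum>i\<in>I. ?e i) + (\<Sum>m<Q. \<Sum>i\<in>I. ?d i (nth_group_member g I m i)))"
    using sum_group_average[OF I, of ?e g] sum.swap[of "\<lambda>i m. ?d i (nth_group_member g I m i)" "{..<Q}" I]
    by (simp add: sum.distrib flip: sum_distrib_left)
  finally show ?thesis .
qed

definition mean_sq_dist :: "nat \<Rightarrow> (nat \<Rightarrow> 'v::real_normed_vector) \<Rightarrow> (nat \<Rightarrow> 'v) \<Rightarrow> real" where
  "mean_sq_dist n x y = (1 / real n) * (\<Sum>i\<in>{1..n}. (norm (x i - y i))\<^sup>2)"

definition estimation_error ::
  "(nat \<Rightarrow> nat) \<Rightarrow> nat \<Rightarrow> nat \<Rightarrow> (nat \<Rightarrow> 'v::real_normed_vector) \<Rightarrow> ('a \<Rightarrow> 'v) \<Rightarrow> (nat \<Rightarrow> 'a) \<Rightarrow> real"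
  where
  "estimation_error g n Q lh lam al =
     mean_sq_dist n lh (\<lambda>i. lam (al i))
     + (\<Sum>m<Q. mean_sq_dist n lh (\<lambda>i. lh (nth_group_member g {1..n} m i)))"

lemma mean_within_group_dispersion_le:
  fixes al :: "nat \<Rightarrow> 'a::real_normed_vector" and lh :: "nat \<Rightarrow> 'v::real_normed_vector"
  assumes "\<And>a b. a \<in> A \<Longrightarrow> b \<in> A \<Longrightarrow> norm (a - b) \<le> Bc * norm (lam a - lam b)"
    and "\<And>i. al i \<in> A"
    and "\<And>i. i \<in> {1..n} \<Longrightarrow> card (group_of g {1..n} i) \<le> Q"
  shows "(\<Sum>i\<in>{1..n}. within_group_dispersion g {1..n} al i) / n
    \<le> 6 * Bc\<^sup>2 * estimation_error g n Q lh lam al"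
proof -
  let ?E = "\<Sum>i\<in>{1..n}. (norm (lh i - lam (al i)))\<^sup>2"
  let ?D = "\<Sum>m<Q. \<Sum>i\<in>{1..n}. (norm (lh i - lh (nth_group_member g {1..n} m i)))\<^sup>2"
  have "(\<Sum>i\<in>{1..n}. within_group_dispersion g {1..n} al i) / n \<le> 3 * Bc\<^sup>2 * (2 * ?E + ?D) / n"
    using sum_within_group_dispersion_le[OF _ assms] by (intro divide_right_mono) auto
  also have "\<dots> = 6 * Bc\<^sup>2 * (?E / n) + 3 * (Bc\<^sup>2 * (?D / n))"
    by (simp add: add_divide_distrib algebra_simps)
  also have "\<dots> \<le> 6 * Bc\<^sup>2 * (?E / n + ?D / n)"
  proof -
    have "0 \<le> Bc\<^sup>2 * (?D / n)"
      by (intro mult_nonneg_nonneg divide_nonneg_nonneg sum_nonneg) auto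
    then show ?thesis
      by (simp add: distrib_left mult.assoc)
  qed
  also have "\<dots> = 6 * Bc\<^sup>2 * estimation_error g n Q lh lam al"
    by (simp add: estimation_error_def mean_sq_dist_def sum_divide_distrib)
  finally show ?thesis .
qed

section \<open>The Gram matrix and the estimand\<close>

lemma norm_matrix_vector_mult_le:
  fixes A :: "real^'n::finite^'m::finite"
  shows "norm (A *v x) \<le> norm A * norm x"
proof (rule power2_le_imp_le)
  have "(norm (A *v x))\<^sup>2 = (\<Sum>i\<in>UNIV. (A $ i \<bullet> x)\<^sup>2)"
    unfolding power2_norm_eq_inner by (simp add: inner_vec_def matrix_vector_mult_def power2_eq_square)
  also have "\<dots> \<le> (\<Sum>i\<in>UNIV. (A $ i \<bullet> A $ i) * (x \<bullet> x))"
    by (intro sum_mono Cauchy_Schwarz_ineq)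
  also have "\<dots> = (norm A * norm x)\<^sup>2"
    by (simp add: power2_norm_eq_inner power_mult_distrib inner_vec_def sum_distrib_right)
  finally show "(norm (A *v x))\<^sup>2 \<le> (norm A * norm x)\<^sup>2" .
qed simp

lemma pos_def_mat_coercive:
  fixes Omega :: "real^'k::finite^'k"
  assumes "pos_def_mat Omega"
  obtains mu where "mu > 0" and "\<And>v. mu * (norm v)\<^sup>2 \<le> v \<bullet> (Omega *v v)"
proof -
  let ?q = "\<lambda>v::real^'k. v \<bullet> (Omega *v v)"
  have cont: "continuous_on (sphere 0 1) ?q"
    by (intro continuous_intros matrix_vector_mult_linear_continuous_on[THEN continuous_on_compose2[of UNIV]]) auto
  then obtain u where u: "u \<in> sphere 0 1" and min: "\<forall>y\<in>sphere 0 1. ?q u \<le> ?q y"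
    using continuous_attains_inf[OF compact_sphere _ cont] by (auto simp: sphere_eq_empty)
  have "u \<noteq> 0"
    using u by auto
  then have "?q u > 0"
    using assms unfolding pos_def_mat_def by blast
  moreover have "?q u * (norm v)\<^sup>2 \<le> ?q v" for v
  proof (cases "v = 0")
    case False
    define w where "w = (1 / norm v) *\<^sub>R v"
    have "v = norm v *\<^sub>R w"
      using False by (simp add: w_def)
    then have "?q v = ?q (norm v *\<^sub>R w)"
      by (rule arg_cong)
    also have "\<dots> = (norm v)\<^sup>2 * ?q w"
      by (simp add: matrix_vector_mult_scaleR power2_eq_square)
    finally have "?q v = (norm v)\<^sup>2 * ?q w" .
    moreover have "w \<in> sphere 0 1"
      using False by (simp add: w_def)
    then have "?q u \<le> ?q w"
      using min by blast
    ultimately show ?thesis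
      by (simp add: mult.commute mult_right_mono)
  qed simp
  ultimately show ?thesis
    using that by blast
qed

lemma quadratic_form_perturb_ge:
  fixes S Omega :: "real^'k::finite^'k"
  assumes coercive: "\<And>v. mu * (norm v)\<^sup>2 \<le> v \<bullet> (Omega *v v)"
    and close: "dist S Omega \<le> mu / 2"
  shows "mu / 2 * (norm v)\<^sup>2 \<le> v \<bullet> (S *v v)"
proof -
  have "\<bar>v \<bullet> ((S - Omega) *v v)\<bar> \<le> norm v * (norm (S - Omega) * norm v)"
    by (meson Cauchy_Schwarz_ineq2 norm_matrix_vector_mult_le mult_left_mono norm_ge_zero order_trans)
  also have "\<dots> = norm (S - Omega) * (norm v)\<^sup>2"
    by (simp add: power2_eq_square mult_ac)
  also have "\<dots> \<le> mu / 2 * (norm v)\<^sup>2"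
    using close by (intro mult_right_mono) (simp_all add: dist_norm)
  finally have "\<bar>v \<bullet> ((S - Omega) *v v)\<bar> \<le> mu / 2 * (norm v)\<^sup>2" .
  moreover have "v \<bullet> (S *v v) = v \<bullet> (Omega *v v) + v \<bullet> ((S - Omega) *v v)"
    by (simp add: matrix_vector_mult_diff_rdistrib inner_diff_right)
  ultimately show ?thesis
    using coercive[of v] by linarith
qed

lemma norm_matrix_inv_mult_le:
  fixes S :: "real^'k::finite^'k"
  assumes "m > 0" and coercive: "\<And>v. m * (norm v)\<^sup>2 \<le> v \<bullet> (S *v v)"
  shows "norm (matrix_inv S *v b) \<le> norm b / m"
proof -
  have "x = 0" if "S *v x = 0" for x
    using coercive[of x] that \<open>m > 0\<close> by (auto simp: mult_le_0_iff)
  then have "invertible S"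
    using matrix_left_invertible_ker invertible_left_inverse by blast
  then have "S ** matrix_inv S = mat 1"
    unfolding invertible_def matrix_inv_def by (rule someI_ex[THEN conjunct1])
  then have Sk: "S *v (matrix_inv S *v b) = b"
    by (metis matrix_vector_mul_assoc matrix_vector_mul_lid)
  define k where "k = matrix_inv S *v b"
  have "m * (norm k)\<^sup>2 \<le> k \<bullet> b"
    using coercive[of k] Sk by (simp add: k_def)
  also have "\<dots> \<le> norm k * norm b"
    by (rule norm_cauchy_schwarz)
  finally have "m * norm k * norm k \<le> norm b * norm k"
    by (simp add: power2_eq_square mult_ac)
  then show ?thesis
    using \<open>m > 0\<close> by (cases "norm k = 0") (auto simp: k_def field_simps)
qed

lemma norm_kappa_NT_le:
  fixes X :: "nat \<Rightarrow> nat \<Rightarrow> real^'k::finite" and Omega :: "real^'k^'k" and Bx :: real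
  assumes "N \<ge> 1" and "T \<ge> 1" and "mu > 0"
    and coercive: "\<And>v. mu * (norm v)\<^sup>2 \<le> v \<bullet> (Omega *v v)"
    and close: "dist ((1 / (real N * real T)) *\<^sub>R
        (\<Sum>i\<in>{1..N}. \<Sum>t\<in>{1..T}. outer_self (two_way_demean g c N T X i t))) Omega \<le> mu / 2"
    and bounded: "\<And>i t k. i \<in> {1..N} \<Longrightarrow> t \<in> {1..T} \<Longrightarrow> \<bar>two_way_demean g c N T X i t $ k\<bar> \<le> Bx"
  shows "norm (kappa_NT g c N T X Gam)
    \<le> 2 * real CARD('k) * Bx / mu * ((\<Sum>i\<in>{1..N}. \<Sum>t\<in>{1..T}. \<bar>two_way_demean g c N T Gam i t\<bar>) / (real N * real T))"
proof -
  let ?Xt = "two_way_demean g c N T X" and ?Gt = "two_way_demean g c N T Gam"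
  let ?S = "\<Sum>i\<in>{1..N}. \<Sum>t\<in>{1..T}. outer_self (?Xt i t)"
  let ?b = "\<Sum>i\<in>{1..N}. \<Sum>t\<in>{1..T}. ?Gt i t *\<^sub>R ?Xt i t"
  have NT: "real N * real T > 0"
    using assms by simp
  have "N * T * mu / 2 * (norm v)\<^sup>2 \<le> v \<bullet> (?S *v v)" for v
  proof -
    have "mu / 2 * (norm v)\<^sup>2 \<le> v \<bullet> (((1 / (real N * real T)) *\<^sub>R ?S) *v v)"
      by (rule quadratic_form_perturb_ge[OF coercive close])
    then show ?thesis
      using NT by (simp add: scaleR_matrix_vector_assoc[symmetric] field_simps)
  qed
  then have "norm (kappa_NT g c N T X Gam) \<le> norm ?b / (N * T * mu / 2)"
    unfolding kappa_NT_def using NT \<open>mu > 0\<close> by (intro norm_matrix_inv_mult_le) auto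
  also have "norm ?b \<le> (\<Sum>i\<in>{1..N}. \<Sum>t\<in>{1..T}. \<bar>?Gt i t\<bar> * (CARD('k) * Bx))"
  proof -
    have "norm (?Xt i t) \<le> CARD('k) * Bx" if "i \<in> {1..N}" "t \<in> {1..T}" for i t
      using norm_le_l1_cart[of "?Xt i t"] sum_mono[of UNIV "\<lambda>k. \<bar>?Xt i t $ k\<bar>" "\<lambda>_. Bx"] bounded[OF that]
      by simp
    then show ?thesis
      by (intro order_trans[OF norm_sum] sum_mono order_trans[OF norm_sum])
        (simp add: mult_left_mono)
  qed
  then have "norm ?b / (N * T * mu / 2)
      \<le> (\<Sum>i\<in>{1..N}. \<Sum>t\<in>{1..T}. \<bar>?Gt i t\<bar> * (CARD('k) * Bx)) / (N * T * mu / 2)"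
    using NT \<open>mu > 0\<close> by (intro divide_right_mono) auto
  also have "\<dots> = 2 * real CARD('k) * Bx / mu * ((\<Sum>i\<in>{1..N}. \<Sum>t\<in>{1..T}. \<bar>?Gt i t\<bar>) / (real N * real T))"
    unfolding sum_distrib_right[symmetric] using NT \<open>mu > 0\<close> by (simp add: field_simps)
  finally show ?thesis .
qed

lemma abs_component_le_Max:
  fixes Z :: "nat \<Rightarrow> nat \<Rightarrow> real^'k::finite"
  assumes "finite I" and "finite J" and "i \<in> I" and "t \<in> J"
  shows "\<bar>Z i t $ k\<bar> \<le> Max {\<bar>Z i t $ k\<bar> | k i t. i \<in> I \<and> t \<in> J}"
proof (rule Max_ge)
  have "{\<bar>Z i t $ k\<bar> | k i t. i \<in> I \<and> t \<in> J} \<subseteq> (\<lambda>(k, i, t). \<bar>Z i t $ k\<bar>) ` (UNIV \<times> I \<times> J)"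
    by force
  then show "finite {\<bar>Z i t $ k\<bar> | k i t. i \<in> I \<and> t \<in> J}"
    by (rule finite_subset) (use assms in auto)
qed (use assms in blast)

lemma norm_kappa_NT_le_estimation_error:
  fixes X :: "nat \<Rightarrow> nat \<Rightarrow> real^'k::finite" and Omega :: "real^'k^'k" and Bx :: real
    and h :: "'a::real_normed_vector \<times> 'c::real_normed_vector \<Rightarrow> real"
    and lh fh :: "nat \<Rightarrow> 'v::real_normed_vector"
  assumes mixed: "\<And>a a' c c'. a \<in> A \<Longrightarrow> a' \<in> A \<Longrightarrow> c \<in> Cs \<Longrightarrow> c' \<in> Cs \<Longrightarrow>
      \<bar>h (a, c) - h (a, c') - h (a', c) + h (a', c')\<bar> \<le> L * norm (a - a') * norm (c - c')"
    and "L \<ge> 0" and al: "\<And>i. al i \<in> A" and ga: "\<And>t. ga t \<in> Cs"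
    and lipA: "\<And>a b. a \<in> A \<Longrightarrow> b \<in> A \<Longrightarrow> norm (a - b) \<le> Bc * norm (lam a - lam b)"
    and lipC: "\<And>a b. a \<in> Cs \<Longrightarrow> b \<in> Cs \<Longrightarrow> norm (a - b) \<le> Bc * norm (fs a - fs b)"
    and Qg: "\<And>i. i \<in> {1..N} \<Longrightarrow> card (group_of g {1..N} i) \<le> Q"
    and Qc: "\<And>t. t \<in> {1..T} \<Longrightarrow> card (group_of c {1..T} t) \<le> Q"
    and NT: "N \<ge> 1" "T \<ge> 1" and "mu > 0"
    and coercive: "\<And>v. mu * (norm v)\<^sup>2 \<le> v \<bullet> (Omega *v v)"
    and close: "dist ((1 / (real N * real T)) *\<^sub>R
        (\<Sum>i\<in>{1..N}. \<Sum>t\<in>{1..T}. outer_self (two_way_demean g c N T X i t))) Omega \<le> mu / 2"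
    and bounded: "\<And>i t k. i \<in> {1..N} \<Longrightarrow> t \<in> {1..T} \<Longrightarrow> \<bar>two_way_demean g c N T X i t $ k\<bar> \<le> Bx"
  shows "norm (kappa_NT g c N T X (\<lambda>i t. h (al i, ga t)))
    \<le> 6 * real CARD('k) * L * Bc\<^sup>2 / mu * Bx
        * (estimation_error g N Q lh lam al + estimation_error c T Q fh fs ga)"
proof -
  let ?dA = "within_group_dispersion g {1..N} al" and ?dC = "within_group_dispersion c {1..T} ga"
  have "Bx \<ge> 0"
    using bounded[of 1 1] NT by force
  then have C: "2 * real CARD('k) * Bx / mu \<ge> 0"
    using \<open>mu > 0\<close> by simp
  have "norm (kappa_NT g c N T X (\<lambda>i t. h (al i, ga t)))
      \<le> 2 * real CARD('k) * Bx / mu * (L / 2 * ((\<Sum>i\<in>{1..N}. ?dA i) / N + (\<Sum>t\<in>{1..T}. ?dC t) / T))"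
    using norm_kappa_NT_le[OF NT \<open>mu > 0\<close> coercive close bounded]
      mult_left_mono[OF mean_abs_two_way_demean_le[OF mixed \<open>L \<ge> 0\<close> al ga] C]
    by (rule order_trans)
  also have "\<dots> \<le> 2 * real CARD('k) * Bx / mu * (L / 2 * (6 * Bc\<^sup>2 * estimation_error g N Q lh lam al
      + 6 * Bc\<^sup>2 * estimation_error c T Q fh fs ga))"
    using mean_within_group_dispersion_le[OF lipA al Qg] mean_within_group_dispersion_le[OF lipC ga Qc]
      C \<open>L \<ge> 0\<close> by (intro mult_left_mono add_mono) auto
  also have "\<dots> = 6 * real CARD('k) * L * Bc\<^sup>2 / mu * Bx
      * (estimation_error g N Q lh lam al + estimation_error c T Q fh fs ga)"
    using \<open>mu > 0\<close> by (simp add: field_simps)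
  finally show ?thesis .
qed

section \<open>Outer probability and stochastic order\<close>

lemma outer_prob_le_measure: "B \<in> sets M \<Longrightarrow> A \<subseteq> B \<Longrightarrow> outer_prob M A \<le> measure M B"
  unfolding outer_prob_def by (rule cInf_lower) (auto intro: bdd_belowI[of _ 0])

lemma outer_prob_nonneg: "A \<subseteq> space M \<Longrightarrow> 0 \<le> outer_prob M A"
  unfolding outer_prob_def by (rule cInf_greatest) auto

lemma outer_prob_empty: "outer_prob M {} = 0"
  using outer_prob_le_measure[of "{}" M "{}"] outer_prob_nonneg[of "{}" M] by simp

lemma outer_prob_mono: "A \<subseteq> B \<Longrightarrow> B \<subseteq> space M \<Longrightarrow> outer_prob M A \<le> outer_prob M B"
  unfolding outer_prob_def by (rule cInf_superset_mono) (auto intro: bdd_belowI[of _ 0])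

lemma outer_prob_Un_le:
  assumes "prob_space M" and A: "A \<subseteq> space M" and B: "B \<subseteq> space M"
  shows "outer_prob M (A \<union> B) \<le> outer_prob M A + outer_prob M B"
proof -
  interpret prob_space M by (rule assms)
  have "outer_prob M (A \<union> B) - measure M D \<le> measure M C"
    if "C \<in> sets M" "A \<subseteq> C" "D \<in> sets M" "B \<subseteq> D" for C D
  proof -
    have "outer_prob M (A \<union> B) \<le> measure M (C \<union> D)"
      using that by (intro outer_prob_le_measure) auto
    also have "\<dots> \<le> measure M C + measure M D"
      using that by (intro measure_Un_le) auto
    finally show ?thesis by simp
  qed
  then have "outer_prob M (A \<union> B) - measure M D \<le> outer_prob M A" if "D \<in> sets M" "B \<subseteq> D" for D
    unfolding outer_prob_def[of M A] using A that by (intro cInf_greatest) auto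
  then have "outer_prob M (A \<union> B) - outer_prob M A \<le> outer_prob M B"
    unfolding outer_prob_def[of M B] using B by (intro cInf_greatest) (auto simp: algebra_simps)
  then show ?thesis by simp
qed

lemma eventually_outer_prob_cover_less:
  assumes "prob_space M"
    and "eventually (\<lambda>n. outer_prob M {w \<in> space M. P n w} < e1) F"
    and "eventually (\<lambda>n. outer_prob M {w \<in> space M. Q n w} < e2) F"
    and cover: "\<And>n w. w \<in> space M \<Longrightarrow> R n w \<Longrightarrow> P n w \<or> Q n w"
  shows "eventually (\<lambda>n. outer_prob M {w \<in> space M. R n w} < e1 + e2) F"
  using assms(2,3)
proof eventually_elim
  case (elim n)
  have "outer_prob M {w \<in> space M. R n w}
      \<le> outer_prob M ({w \<in> space M. P n w} \<union> {w \<in> space M. Q n w})"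
    using cover by (intro outer_prob_mono) auto
  also have "\<dots> \<le> outer_prob M {w \<in> space M. P n w} + outer_prob M {w \<in> space M. Q n w}"
    by (intro outer_prob_Un_le[OF assms(1)]) auto
  finally show ?case
    using elim by simp
qed

lemma bigOP_const: "bigOP M F (\<lambda>_ _. C) (\<lambda>_. 1)"
  unfolding bigOP_def by (auto intro!: exI[of _ "\<bar>C\<bar>"] simp: outer_prob_empty)

lemma bigOP_add:
  assumes "prob_space M" and Y: "bigOP M F Y a" and Z: "bigOP M F Z a"
  shows "bigOP M F (\<lambda>n w. Y n w + Z n w) a"
  unfolding bigOP_def
proof (intro allI impI)
  fix eps :: real
  assume "eps > 0"
  then obtain B1 B2
    where "eventually (\<lambda>n. outer_prob M {w \<in> space M. \<bar>Y n w\<bar> > B1 * a n} < eps / 2) F"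
      and "eventually (\<lambda>n. outer_prob M {w \<in> space M. \<bar>Z n w\<bar> > B2 * a n} < eps / 2) F"
    using Y Z unfolding bigOP_def by (meson half_gt_zero)
  then have "eventually (\<lambda>n. outer_prob M {w \<in> space M. \<bar>Y n w + Z n w\<bar> > (B1 + B2) * a n} < eps / 2 + eps / 2) F"
    by (rule eventually_outer_prob_cover_less[OF assms(1)]) (auto simp: distrib_right)
  then show "\<exists>B. eventually (\<lambda>n. outer_prob M {w \<in> space M. \<bar>Y n w + Z n w\<bar> > B * a n} < eps) F"
    by auto
qed

lemma bigOP_sum:
  assumes "prob_space M" and "\<And>m. m \<in> I \<Longrightarrow> bigOP M F (Y m) a"
  shows "bigOP M F (\<lambda>n w. \<Sum>m\<in>I. Y m n w) a"
proof (cases "finite I")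
  case True
  then show ?thesis
    using assms(2)
  proof (induction I rule: finite_induct)
    case empty
    show ?case
      unfolding bigOP_def by (auto intro!: exI[of _ 0] simp: outer_prob_empty)
  next
    case (insert m I)
    then show ?case
      by (simp add: bigOP_add[OF assms(1)])
  qed
next
  case False
  then show ?thesis
    unfolding bigOP_def by (auto intro!: exI[of _ 0] simp: outer_prob_empty)
qed

lemma bigOP_mult:
  assumes "prob_space M" and Y: "bigOP M F Y (\<lambda>_. 1)" and Z: "bigOP M F Z a"
  shows "bigOP M F (\<lambda>n w. Y n w * Z n w) a"
  unfolding bigOP_def
proof (intro allI impI)
  fix eps :: real
  assume "eps > 0"
  then obtain B1 B2
    where "eventually (\<lambda>n. outer_prob M {w \<in> space M. \<bar>Y n w\<bar> > B1 * 1} < eps / 2) F"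
      and "eventually (\<lambda>n. outer_prob M {w \<in> space M. \<bar>Z n w\<bar> > B2 * a n} < eps / 2) F"
    using Y Z unfolding bigOP_def by (meson half_gt_zero)
  then have "eventually (\<lambda>n. outer_prob M {w \<in> space M. \<bar>Y n w * Z n w\<bar> > B1 * B2 * a n} < eps / 2 + eps / 2) F"
  proof (rule eventually_outer_prob_cover_less[OF assms(1)])
    fix n w
    assume large: "\<bar>Y n w * Z n w\<bar> > B1 * B2 * a n"
    show "\<bar>Y n w\<bar> > B1 * 1 \<or> \<bar>Z n w\<bar> > B2 * a n"
    proof (rule ccontr)
      assume "\<not> ?thesis"
      then have "\<bar>Y n w\<bar> * \<bar>Z n w\<bar> \<le> B1 * (B2 * a n)"
        by (intro mult_mono) auto
      with large show False
        by (simp add: abs_mult mult.assoc)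
    qed
  qed
  then show "\<exists>B. eventually (\<lambda>n. outer_prob M {w \<in> space M. \<bar>Y n w * Z n w\<bar> > B * a n} < eps) F"
    by auto
qed

lemma bigOP_bounded_near_limit:
  fixes S :: "'i \<Rightarrow> 'w \<Rightarrow> 'v::metric_space"
  assumes "prob_space M" and W: "bigOP M F W a"
    and S: "conv_in_prob M F S L" and "eta > 0"
    and bound: "eventually (\<lambda>n. \<forall>w\<in>space M. dist (S n w) L \<le> eta \<longrightarrow> \<bar>V n w\<bar> \<le> \<bar>W n w\<bar>) F"
  shows "bigOP M F V a"
  unfolding bigOP_def
proof (intro allI impI)
  fix eps :: real
  assume "eps > 0"
  then obtain B where B: "eventually (\<lambda>n. outer_prob M {w \<in> space M. \<bar>W n w\<bar> > B * a n} < eps / 2) F"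
    using W unfolding bigOP_def by (meson half_gt_zero)
  have "((\<lambda>n. outer_prob M {w \<in> space M. dist (S n w) L > eta}) \<longlongrightarrow> 0) F"
    using S \<open>eta > 0\<close> unfolding conv_in_prob_def by blast
  then have "eventually (\<lambda>n. outer_prob M {w \<in> space M. dist (S n w) L > eta} < eps / 2) F"
    using \<open>eps > 0\<close> by (intro order_tendstoD(2)) auto
  then have "eventually (\<lambda>n. outer_prob M {w \<in> space M. \<bar>V n w\<bar> > \<bar>W n w\<bar>} < eps / 2) F"
    using bound
  proof eventually_elim
    case (elim n)
    have "outer_prob M {w \<in> space M. \<bar>V n w\<bar> > \<bar>W n w\<bar>} \<le> outer_prob M {w \<in> space M. dist (S n w) L > eta}"
      using elim(2) by (intro outer_prob_mono) auto
    with elim(1) show ?case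
      by linarith
  qed
  then have "eventually (\<lambda>n. outer_prob M {w \<in> space M. \<bar>V n w\<bar> > B * a n} < eps / 2 + eps / 2) F"
    using B by (rule eventually_outer_prob_cover_less[OF assms(1)]) auto
  then show "\<exists>B. eventually (\<lambda>n. outer_prob M {w \<in> space M. \<bar>V n w\<bar> > B * a n} < eps) F"
    by auto
qed

theorem lemma2:
  fixes M :: "'w measure"
    and A :: "'a::euclidean_space set" and Cs :: "'c::euclidean_space set"
    and h :: "'a \<times> 'c \<Rightarrow> real"
    and alpha :: "nat \<Rightarrow> nat \<Rightarrow> 'w \<Rightarrow> nat \<Rightarrow> 'a"
    and gamma :: "nat \<Rightarrow> nat \<Rightarrow> 'w \<Rightarrow> nat \<Rightarrow> 'c"
    and X :: "nat \<Rightarrow> nat \<Rightarrow> 'w \<Rightarrow> nat \<Rightarrow> nat \<Rightarrow> real^'k::finite"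
    and g c :: "nat \<Rightarrow> nat \<Rightarrow> 'w \<Rightarrow> nat \<Rightarrow> nat"
    and Qmax :: nat
    and lhat :: "nat \<Rightarrow> nat \<Rightarrow> 'w \<Rightarrow> nat \<Rightarrow> real^'r::finite"
    and fhat :: "nat \<Rightarrow> nat \<Rightarrow> 'w \<Rightarrow> nat \<Rightarrow> real^'r"
    and xi :: "nat \<Rightarrow> nat \<Rightarrow> real"
    and Omega :: "real^'k^'k"
  assumes P: "prob_space M"
    (* xi_NT > 0, xi_NT \<rightarrow> 0 as N,T \<rightarrow> \<infinity> *)
    and xi_pos: "\<And>N T. xi N T > 0"
    and xi_lim: "((\<lambda>(N, T). xi N T) \<longlongrightarrow> 0) (sequentially \<times>\<^sub>F sequentially)"
    (* (i) h twice continuously differentiable, uniformly bounded second derivatives *)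
    and h_C2: "\<exists>U Dh D2h L. open U \<and> A \<times> Cs \<subseteq> U \<and>
          (\<forall>x\<in>U. (h has_derivative blinfun_apply (Dh x)) (at x)) \<and>
          (\<forall>x\<in>U. (Dh has_derivative blinfun_apply (D2h x)) (at x)) \<and>
          continuous_on U D2h \<and>
          (\<forall>x\<in>A \<times> Cs. norm (D2h x :: ('a \<times> 'c) \<Rightarrow>\<^sub>L (('a \<times> 'c) \<Rightarrow>\<^sub>L real)) \<le> L)"
    and alpha_in: "\<And>N T w i. alpha N T w i \<in> A"
    and gamma_in: "\<And>N T w t. gamma N T w t \<in> Cs"
    (* (ii) group sizes bounded by a fixed Q_max *)
    and g_size: "\<And>N T w i. i \<in> {1..N} \<Longrightarrow>
          card {i' \<in> {1..N}. g N T w i' = g N T w i} \<le> Qmax"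
    and c_size: "\<And>N T w t. t \<in> {1..T} \<Longrightarrow>
          card {t' \<in> {1..T}. c N T w t' = c N T w t} \<le> Qmax"
    (* (iii) *)
    and iii: "\<exists>lam fs (Bc::real). Bc > 0 \<and> convex A \<and> convex Cs \<and>
          (\<forall>a\<in>A. \<forall>b\<in>A. norm (a - b) \<le> Bc * norm (lam a - lam b :: real^'r)) \<and>
          (\<forall>a\<in>Cs. \<forall>b\<in>Cs. norm (a - b) \<le> Bc * norm (fs a - fs b :: real^'r)) \<and>

          bigOP M (sequentially \<times>\<^sub>F sequentially)
            (\<lambda>(N, T) w. (1 / real N) * (\<Sum>i\<in>{1..N}. (norm (lhat N T w i - lam (alpha N T w i)))\<^sup>2))
            (\<lambda>(N, T). xi N T) \<and>
          bigOP M (sequentially \<times>\<^sub>F sequentially)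
            (\<lambda>(N, T) w. (1 / real T) * (\<Sum>t\<in>{1..T}. (norm (fhat N T w t - fs (gamma N T w t)))\<^sup>2))
            (\<lambda>(N, T). xi N T)"
    (* (v) *)
    and v_lam: "\<And>j. (\<And>N T w i. i \<in> {1..N} \<Longrightarrow>
                    j N T w i \<in> {1..N} \<and> g N T w (j N T w i) = g N T w i) \<Longrightarrow>
          bigOP M (sequentially \<times>\<^sub>F sequentially)
            (\<lambda>(N, T) w. (1 / real N) * (\<Sum>i\<in>{1..N}. (norm (lhat N T w i - lhat N T w (j N T w i)))\<^sup>2))
            (\<lambda>(N, T). xi N T)"
    and v_f: "\<And>s. (\<And>N T w t. t \<in> {1..T} \<Longrightarrow>
                    s N T w t \<in> {1..T} \<and> c N T w (s N T w t) = c N T w t) \<Longrightarrow>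
          bigOP M (sequentially \<times>\<^sub>F sequentially)
            (\<lambda>(N, T) w. (1 / real T) * (\<Sum>t\<in>{1..T}. (norm (fhat N T w t - fhat N T w (s N T w t)))\<^sup>2))
            (\<lambda>(N, T). xi N T)"
    (* (vi) *)
    and vi_max: "bigOP M (sequentially \<times>\<^sub>F sequentially)
            (\<lambda>(N, T) w. Max {\<bar>two_way_demean (g N T w) (c N T w) N T (X N T w) i t $ k\<bar>
                              | k i t. i \<in> {1..N} \<and> t \<in> {1..T}})
            (\<lambda>_. 1)"
    and vi_plim: "conv_in_prob M (sequentially \<times>\<^sub>F sequentially)
            (\<lambda>(N, T) w. (1 / (real N * real T)) *\<^sub>R
               (\<Sum>i\<in>{1..N}. \<Sum>t\<in>{1..T}.
                  outer_self (two_way_demean (g N T w) (c N T w) N T (X N T w) i t)))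
            Omega"
    and Omega_pd: "pos_def_mat Omega"
  shows "bigOP M (sequentially \<times>\<^sub>F sequentially)
            (\<lambda>(N, T) w. norm (kappa_NT (g N T w) (c N T w) N T (X N T w)
                                  (\<lambda>i t. h (alpha N T w i, gamma N T w t))))
            (\<lambda>(N, T). xi N T)"
proof -
  let ?F = "sequentially \<times>\<^sub>F sequentially :: (nat \<times> nat) filter"
  let ?xi = "\<lambda>(N, T). xi N T"
  obtain U Dh D2h L where sub: "A \<times> Cs \<subseteq> U"
      and Dh: "\<forall>x\<in>U. (h has_derivative blinfun_apply (Dh x)) (at x)"
      and D2h: "\<forall>x\<in>U. (Dh has_derivative blinfun_apply (D2h x)) (at x)"
      and bd: "\<forall>x\<in>A \<times> Cs. norm (D2h x) \<le> L"
    using h_C2 by blast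
  obtain lam fs and Bc :: real where "convex A" and "convex Cs"
      and lipA: "\<forall>a\<in>A. \<forall>b\<in>A. norm (a - b) \<le> Bc * norm (lam a - lam b :: real^'r)"
      and lipC: "\<forall>a\<in>Cs. \<forall>b\<in>Cs. norm (a - b) \<le> Bc * norm (fs a - fs b :: real^'r)"
      and err_lam: "bigOP M ?F (\<lambda>(N, T) w. mean_sq_dist N (lhat N T w) (\<lambda>i. lam (alpha N T w i))) ?xi"
      and err_f: "bigOP M ?F (\<lambda>(N, T) w. mean_sq_dist T (fhat N T w) (\<lambda>t. fs (gamma N T w t))) ?xi"
    using iii unfolding mean_sq_dist_def by blast
  have "L \<ge> 0"
    using bd alpha_in gamma_in by (meson mem_Sigma_iff norm_ge_zero order_trans)
  obtain mu where "mu > 0" and coercive: "\<And>v. mu * (norm v)\<^sup>2 \<le> v \<bullet> (Omega *v v)"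
    using pos_def_mat_coercive[OF Omega_pd] by blast
  have match_lam: "bigOP M ?F (\<lambda>(N, T) w. mean_sq_dist N (lhat N T w)
      (\<lambda>i. lhat N T w (nth_group_member (g N T w) {1..N} m i))) ?xi" for m
    unfolding mean_sq_dist_def by (rule v_lam) (rule nth_group_member_in_group)
  have match_f: "bigOP M ?F (\<lambda>(N, T) w. mean_sq_dist T (fhat N T w)
      (\<lambda>t. fhat N T w (nth_group_member (c N T w) {1..T} m t))) ?xi" for m
    unfolding mean_sq_dist_def by (rule v_f) (rule nth_group_member_in_group)
  have err: "bigOP M ?F (\<lambda>(N, T) w. estimation_error (g N T w) N Qmax (lhat N T w) lam (alpha N T w)
      + estimation_error (c N T w) T Qmax (fhat N T w) fs (gamma N T w)) ?xi"
    unfolding estimation_error_def case_prod_beta'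
    by (intro bigOP_add[OF P] bigOP_sum[OF P] err_lam[unfolded case_prod_beta'] err_f[unfolded case_prod_beta']
        match_lam[unfolded case_prod_beta'] match_f[unfolded case_prod_beta'])
  define C where "C = 6 * real CARD('k) * L * Bc\<^sup>2 / mu"
  have bound: "norm (kappa_NT (g N T w) (c N T w) N T (X N T w) (\<lambda>i t. h (alpha N T w i, gamma N T w t)))
      \<le> C * Max {\<bar>two_way_demean (g N T w) (c N T w) N T (X N T w) i t $ k\<bar> | k i t. i \<in> {1..N} \<and> t \<in> {1..T}}
          * (estimation_error (g N T w) N Qmax (lhat N T w) lam (alpha N T w)
             + estimation_error (c N T w) T Qmax (fhat N T w) fs (gamma N T w))"
    if "N \<ge> 1" "T \<ge> 1" and close: "dist ((1 / (real N * real T)) *\<^sub>R (\<Sum>i\<in>{1..N}. \<Sum>t\<in>{1..T}.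
        outer_self (two_way_demean (g N T w) (c N T w) N T (X N T w) i t))) Omega \<le> mu / 2" for N T w
    unfolding C_def
  proof (rule norm_kappa_NT_le_estimation_error[where h = h and A = A and Cs = Cs])
    show "\<bar>two_way_demean (g N T w) (c N T w) N T (X N T w) i t $ k\<bar>
      \<le> Max {\<bar>two_way_demean (g N T w) (c N T w) N T (X N T w) i t $ k\<bar> | k i t. i \<in> {1..N} \<and> t \<in> {1..T}}"
      if "i \<in> {1..N}" "t \<in> {1..T}" for i t k
      using that by (intro abs_component_le_Max) auto
  qed (use mixed_difference_bound[OF \<open>convex A\<close> \<open>convex Cs\<close> sub Dh D2h bd] \<open>L \<ge> 0\<close> alpha_in gamma_in lipA[rule_format] lipC[rule_format] g_size c_size that \<open>mu > 0\<close> coercive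
      in \<open>auto simp: group_of_def\<close>)
  show ?thesis
  proof (rule bigOP_bounded_near_limit[OF P bigOP_mult[OF P bigOP_mult[OF P bigOP_const[of M ?F C] vi_max] err] vi_plim])
    show "mu / 2 > 0"
      using \<open>mu > 0\<close> by simp
  qed (simp only: eventually_prod_sequentially case_prod_conv abs_norm_cancel,
      intro exI[of _ 1] allI impI ballI order_trans[OF bound abs_ge_self]; assumption)
qed

end
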